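(* Let $p\in(0,1]$. If $p\ge 2^{-d}$, then $\Pi_p$ is almost surely unbounded; if $p<2^{-d}$, then $\Pi_p$ is almost surely bounded.
   Context: For integers $k\ge 0$ let $\mathcal{V}_k:=[-2^k,2^k)^d\subset\mathbf{R}^d$, $\mathcal{S}_0:=\mathcal{V}_0$ and $\mathcal{S}_{k+1}:=\mathcal{V}_{k+1}\setminus\mathcal{V}_k$. For $n\in\mathbf{Z}$, $\mathcal{D}_n$ denotes the set of dyadic cubes $\prod_{i=1}^d[j_i2^n,(j_i+1)2^n)$ with $(j_1,\dots,j_d)\in\mathbf{Z}^d$. Macroscopic fractal percolation: on a probability space $(\Omega,\mathcal{F},\mathbb{P})$, for each integer $k\ge0$ let $\{U_k(Q)\}$ be i.i.d. Uniform$(0,1)$ random variables indexed by the dyadic cubes $Q\subseteq\mathcal{V}_k$ with $Q\in\mathcal{D}_j$ for some $0\le j\le k$, the families for different $k$ being independent. For $x\in\mathcal{V}_k\cap\mathbf{Z}^d$ and $1\le i\le k+1$ let $Q^{(k)}_i(x)$ be the unique cube of $\mathcal{D}_{k+1-i}$ containing $x$. For $p\in(0,1]$, $\Pi_p\subseteq\mathbf{R}^d$ is the union, over all $k\ge0$ and all $x\in\mathbf{Z}^d\cap\mathcal{S}_k$ such that $U_k(Q^{(k)}_i(x))<p$ for every $i=1,\dots,k+1$, of the unit cubes $[x_1,x_1+1)\times\cdots\times[x_d,x_d+1)$. *)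

theory Defs
  imports "HOL-Probability.Probability"
begin

text \<open>A dyadic cube of \<D>_n (n \<ge> 0) is encoded as a pair (n, j) with j in Z^d,
  standing for prod_i [j_i 2^n, (j_i+1) 2^n).  Dimension d = CARD('n).\<close>

type_synonym 'n dcube = "nat \<times> (int ^ 'n)"

definition dcube_set :: "'n::finite dcube \<Rightarrow> (real ^ 'n) set" where
  "dcube_set Q = {y. \<forall>l. real_of_int (snd Q $ l) * 2 ^ fst Q \<le> y $ l
                       \<and> y $ l < real_of_int (snd Q $ l + 1) * 2 ^ fst Q}"

definition Vbox :: "nat \<Rightarrow> (real ^ 'n::finite) set" where
  "Vbox k = {y. \<forall>l. - (2 ^ k) \<le> y $ l \<and> y $ l < 2 ^ k}"

definition Sshell :: "nat \<Rightarrow> (real ^ 'n::finite) set" where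
  "Sshell k = (if k = 0 then Vbox 0 else Vbox k - Vbox (k - 1))"

definition cubes_in :: "nat \<Rightarrow> ('n::finite dcube) set" where
  "cubes_in k = {Q. fst Q \<le> k \<and> dcube_set Q \<subseteq> Vbox k}"

definition int_pt :: "int ^ 'n::finite \<Rightarrow> real ^ 'n" where
  "int_pt x = (\<chi> l. real_of_int (x $ l))"

definition cubeQ :: "nat \<Rightarrow> nat \<Rightarrow> int ^ 'n::finite \<Rightarrow> 'n dcube" where
  "cubeQ k i x = (k + 1 - i, \<chi> l. x $ l div 2 ^ (k + 1 - i))"

definition unit_cube :: "int ^ 'n::finite \<Rightarrow> (real ^ 'n) set" where
  "unit_cube x = {y. \<forall>l. real_of_int (x $ l) \<le> y $ l \<and> y $ l < real_of_int (x $ l) + 1}"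

definition PiP :: "(nat \<Rightarrow> 'n::finite dcube \<Rightarrow> 'a \<Rightarrow> real) \<Rightarrow> real \<Rightarrow> 'a \<Rightarrow> (real ^ 'n) set" where
  "PiP U p \<omega> = \<Union> {unit_cube x | x k. int_pt x \<in> Sshell k \<and>
                         (\<forall>i \<in> {1..k+1}. U k (cubeQ k i x) \<omega> < p)}"

end

theory Submission
  imports Defs
begin

text \<open>The unit cube at a lattice point of V_k survives stage k iff its k + 1 dyadic ancestors
  are all retained, which has probability p^(k+1); distinct stages use independent families of
  uniforms.

  If 2^d p < 1, the expected number of surviving unit cubes of V_k is at most (2^d p)^(k+1),
  which is summable; by Borel-Cantelli almost surely only finitely many stages contribute, so
  Pi_p is bounded.

  If 2^d p >= 1, consider the lattice points of the corner [2^k, 2^(k+1))^d of the shell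
  S_(k+1). Two of them that lie in a common cube at j levels share j of their retention events,
  and few points share many levels with a given one, so the second moment (Chung-Erdos)
  inequality shows that some corner cube survives with probability of order 1/k. These events
  are independent across stages, hence by the second Borel-Cantelli lemma infinitely many of them
  occur and Pi_p is unbounded.\<close>

definition lattice_box :: "int^'n::finite \<Rightarrow> nat \<Rightarrow> (int^'n) set" where
  "lattice_box a N = {y. \<forall>l. a$l \<le> y$l \<and> y$l < a$l + int N}"

lemma lattice_box_eq_image_PiE:
  "lattice_box a N = vec_lambda ` PiE UNIV (\<lambda>l. {a$l..<a$l + int N})"
proof (intro set_eqI iffI)
  fix y assume "y \<in> lattice_box a N"
  then show "y \<in> vec_lambda ` PiE UNIV (\<lambda>l. {a$l..<a$l + int N})"
    unfolding lattice_box_def by (intro image_eqI[where x = "vec_nth y"]) auto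
qed (auto simp: lattice_box_def)

lemma finite_lattice_box: "finite (lattice_box a N)"
  unfolding lattice_box_eq_image_PiE by (intro finite_imageI finite_PiE) auto

lemma card_lattice_box: "card (lattice_box (a::int^'n::finite) N) = N ^ CARD('n)"
proof -
  have "inj_on (vec_lambda :: ('n \<Rightarrow> int) \<Rightarrow> int^'n) S" for S
    by (rule inj_onI) (metis vec_lambda_inverse UNIV_I)
  then show ?thesis
    unfolding lattice_box_eq_image_PiE by (simp add: card_image card_PiE)
qed

lemma int_div_eq_iff:
  fixes y b c :: int
  assumes "0 < b"
  shows "y div b = c \<longleftrightarrow> c * b \<le> y \<and> y < c * b + b"
proof
  assume "y div b = c"
  moreover have "y div b * b + y mod b = y" "0 \<le> y mod b" "y mod b < b"
    using assms by simp_all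
  ultimately show "c * b \<le> y \<and> y < c * b + b" by auto
next
  assume "c * b \<le> y \<and> y < c * b + b"
  then have "(y - c * b) div b = 0" by (intro div_pos_pos_trivial) auto
  then show "y div b = c"
    using assms div_mult_self1[of b "y - c * b" c] by simp
qed

lemma div_mult_cell_bounds:
  fixes x d T :: int
  assumes "0 < d" "- (T * d) \<le> x" "x < T * d"
  shows "- (T * d) \<le> (x div d) * d" "(x div d) * d + d \<le> T * d"
proof -
  define c where "c = x div d"
  have "c * d \<le> x" "x < c * d + d"
    using int_div_eq_iff[OF assms(1), of x c] by (simp_all add: c_def)
  then have "- T * d < (c + 1) * d" "c * d < T * d"
    using assms(2,3) unfolding distrib_right minus_mult_left by linarith+
  then have "- T < c + 1" "c < T"
    using assms(1) by (simp_all only: mult_less_cancel_right_pos)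
  then have "- T * d \<le> c * d" "(c + 1) * d \<le> T * d"
    using assms(1) mult_right_mono[of "- T" c d] mult_right_mono[of "c + 1" T d] by simp_all
  then show "- (T * d) \<le> c * d" "c * d + d \<le> T * d" by (simp_all add: algebra_simps)
qed

lemma cubeQ_fibre_eq_lattice_box:
  "{y. cubeQ k i y = cubeQ k i x} = lattice_box (\<chi> l. (x$l div 2^(k+1-i)) * 2^(k+1-i)) (2^(k+1-i))"
  by (simp add: cubeQ_def vec_eq_iff lattice_box_def int_div_eq_iff)

lemma int_pt_in_Vbox_iff: "int_pt x \<in> Vbox k \<longleftrightarrow> x \<in> lattice_box (vec (-(2^k))) (2^(k+1))"
proof -
  have "(- (2^k) \<le> real_of_int (x$l) \<and> real_of_int (x$l) < 2^k) \<longleftrightarrow> - (2^k) \<le> x$l \<and> x$l < 2^k" for l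
    by (metis of_int_le_iff of_int_less_iff of_int_minus of_int_numeral of_int_power)
  then show ?thesis by (simp add: Vbox_def int_pt_def lattice_box_def)
qed

lemma cubeQ_mem_cubes_in:
  assumes x: "int_pt x \<in> Vbox k" and i: "i \<in> {1..k+1}"
  shows "cubeQ k i x \<in> cubes_in k"
proof -
  define L where "L = k + 1 - i"
  have L: "L \<le> k" using i by (auto simp: L_def)
  have "y \<in> Vbox k" if y: "y \<in> dcube_set (cubeQ k i x)" for y
  proof -
    have "- (2^k) \<le> y$l \<and> y$l < 2^k" for l
    proof -
      define c where "c = x$l div 2^L"
      have k: "(2::int)^(k-L) * 2^L = 2^k" using L by (simp flip: power_add)
      have "- (2^k) \<le> x$l" "x$l < 2^k"
        using x by (auto simp: int_pt_in_Vbox_iff lattice_box_def)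
      then have "- (2^k) \<le> c * 2^L" "c * 2^L + 2^L \<le> (2::int)^k"
        using div_mult_cell_bounds[of "2^L" "2^(k-L)" "x$l", unfolded k] by (simp_all add: c_def)
      then have "real_of_int (- (2^k)) \<le> of_int (c * 2^L)" "real_of_int (c * 2^L + 2^L) \<le> of_int (2^k)"
        by (simp_all only: of_int_le_iff)
      then have "- (2^k) \<le> real_of_int c * 2^L" "real_of_int c * 2^L + 2^L \<le> (2::real)^k"
        by simp_all
      moreover have "real_of_int c * 2^L \<le> y$l" "y$l < real_of_int c * 2^L + 2^L"
        using y by (simp_all add: dcube_set_def cubeQ_def c_def L_def algebra_simps)
      ultimately show ?thesis by linarith
    qed
    then show ?thesis by (simp add: Vbox_def)
  qed
  then show ?thesis using i by (auto simp: cubes_in_def cubeQ_def)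
qed

lemma Vbox_mono:
  assumes "k \<le> K"
  shows "Vbox k \<subseteq> Vbox K"
proof
  fix y :: "real^'n" assume y: "y \<in> Vbox k"
  have "(2::real) ^ k \<le> 2 ^ K" using assms by simp
  moreover have "- (2^k) \<le> y$l \<and> y$l < 2^k" for l using y by (simp add: Vbox_def)
  ultimately have "- (2^K) \<le> y$l \<and> y$l < 2^K" for l by (smt (verit))
  then show "y \<in> Vbox K" by (simp add: Vbox_def)
qed

lemma bounded_iff_subset_Vbox: "bounded S \<longleftrightarrow> (\<exists>K. S \<subseteq> Vbox K)"
proof
  assume "bounded S"
  then obtain r where r: "\<And>y. y \<in> S \<Longrightarrow> norm y \<le> r" unfolding bounded_iff by blast
  obtain K where K: "r < 2 ^ K" using real_arch_pow[of 2 r] by auto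
  have "\<bar>y $ l\<bar> < 2 ^ K" if "y \<in> S" for y l
    using component_le_norm_cart[of y l] r[OF that] K by linarith
  then have "- (2^K) \<le> y $ l \<and> y $ l < 2 ^ K" if "y \<in> S" for y l
    using that unfolding abs_less_iff by (metis less_imp_le minus_less_iff)
  then have "S \<subseteq> Vbox K" by (auto simp: Vbox_def)
  then show "\<exists>K. S \<subseteq> Vbox K" ..
next
  assume "\<exists>K. S \<subseteq> Vbox K"
  then obtain K where "S \<subseteq> Vbox K" ..
  moreover have "Vbox K \<subseteq> cbox (vec (- (2^K))) (vec (2^K))"
    by (auto simp: Vbox_def mem_box_cart less_imp_le)
  ultimately show "bounded S" using bounded_cbox bounded_subset by blast
qed

lemma unit_cube_subset_Vbox:
  assumes "int_pt x \<in> Vbox k"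
  shows "unit_cube x \<subseteq> Vbox k"
proof
  fix y assume y: "y \<in> unit_cube x"
  have "- (2^k) \<le> x$l" "x$l + 1 \<le> (2::int)^k" for l
    using assms by (auto simp: int_pt_in_Vbox_iff lattice_box_def add1_zle_eq)
  then have "real_of_int (- (2^k)) \<le> of_int (x$l)" "real_of_int (x$l + 1) \<le> of_int (2^k)" for l
    by (simp_all only: of_int_le_iff)
  then have "- (2^k) \<le> real_of_int (x$l)" "real_of_int (x$l) + 1 \<le> (2::real)^k" for l
    by simp_all
  moreover have "real_of_int (x$l) \<le> y$l" "y$l < real_of_int (x$l) + 1" for l
    using y by (simp_all add: unit_cube_def)
  ultimately have "- (2^k) \<le> y$l \<and> y$l < 2^k" for l
    by (meson le_less_trans less_le_trans order_trans)
  then show "y \<in> Vbox k" by (simp add: Vbox_def)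
qed

definition corner :: "nat \<Rightarrow> (int^'n::finite) set" where
  "corner k = lattice_box (vec (2^k)) (2^k)"

lemma finite_corner: "finite (corner k)"
  by (simp add: corner_def finite_lattice_box)

lemma corner_in_Sshell:
  assumes "x \<in> corner k"
  shows "int_pt x \<in> Sshell (Suc k)"
proof -
  have x: "2^k \<le> x$l" "x$l < 2^Suc k" for l
    using assms by (auto simp: corner_def lattice_box_def)
  have "- (2^Suc k) \<le> x$l" for l
    using x(1)[of l] zero_le_power[of "2::int" k] zero_le_power[of "2::int" "Suc k"] by linarith
  with x have "int_pt x \<in> Vbox (Suc k)"
    by (simp add: int_pt_in_Vbox_iff lattice_box_def)
  moreover have "int_pt x \<notin> Vbox k"
    using x by (auto simp: int_pt_in_Vbox_iff lattice_box_def not_less)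
  ultimately show ?thesis by (simp add: Sshell_def)
qed

lemma corner_in_Vbox: "x \<in> corner k \<Longrightarrow> int_pt x \<in> Vbox (Suc k)"
  using corner_in_Sshell by (auto simp: Sshell_def)

lemma power_card_le_sum_power:
  fixes m :: real
  assumes "1 \<le> m" "S \<subseteq> {1..n}"
  shows "m ^ card S \<le> 1 + (\<Sum>j\<in>S. m ^ j)"
proof (cases "S = {}")
  case False
  have S: "finite S" using assms(2) finite_subset by blast
  then have "card S \<le> Max S"
    using assms(2) card_mono[of "{1..Max S}" S] by fastforce
  then have "m ^ card S \<le> m ^ Max S" using assms(1) by (rule power_increasing)
  also have "\<dots> \<le> (\<Sum>j\<in>S. m ^ j)" using S False assms(1) by (intro member_le_sum) auto
  finally show ?thesis by simp
qed simp

lemma (in prob_space) chung_erdos_inequality: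
  assumes X: "finite X" and E: "\<And>x. x \<in> X \<Longrightarrow> E x \<in> events"
  shows "(\<Sum>x\<in>X. prob (E x))^2 \<le> (\<Sum>x\<in>X. \<Sum>y\<in>X. prob (E x \<inter> E y)) * prob (\<Union>x\<in>X. E x)"
proof -
  define F where "F = (\<Union>x\<in>X. E x)"
  define Z where "Z \<omega> = (\<Sum>x\<in>X. indicator (E x) \<omega> :: real)" for \<omega>
  define a b c where "a = (\<Sum>x\<in>X. prob (E x))"
    and "b = (\<Sum>x\<in>X. \<Sum>y\<in>X. prob (E x \<inter> E y))" and "c = prob F"
  have F: "F \<in> events" using X E by (auto simp: F_def)
  have [simp]: "integrable M (indicator A :: 'a \<Rightarrow> real)" if "A \<in> events" for A
    using that by (simp add: emeasure_eq_measure)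
  have [simp]: "integral\<^sup>L M (indicator A :: 'a \<Rightarrow> real) = prob A" if "A \<in> events" for A
    using that by (simp add: Int_absorb2 sets.sets_into_space)
  have Z_sq: "Z \<omega> ^ 2 = (\<Sum>x\<in>X. \<Sum>y\<in>X. indicator (E x \<inter> E y) \<omega>)" for \<omega>
    by (simp add: Z_def power2_eq_square sum_product indicator_inter_arith)
  have Z_F: "Z \<omega> * indicator F \<omega> = Z \<omega>" for \<omega>
    by (cases "\<omega> \<in> F") (auto simp: Z_def F_def intro!: sum.neutral)
  txt \<open>Cauchy-Schwarz for \<open>Z\<close> and the indicator of \<open>F\<close>, noting that \<open>Z\<close> vanishes off \<open>F\<close>.\<close>
  have quadratic: "0 \<le> b - 2 * t * a + t^2 * c" for t
  proof -
    have expand: "(Z \<omega> - t * indicator F \<omega>)^2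
        = (\<Sum>x\<in>X. \<Sum>y\<in>X. indicator (E x \<inter> E y) \<omega>) - 2 * t * Z \<omega> + t^2 * indicator F \<omega>" for \<omega>
      using Z_F[of \<omega>] by (cases "\<omega> \<in> F") (simp_all add: power2_eq_square Z_sq[symmetric] algebra_simps)
    have "0 \<le> integral\<^sup>L M (\<lambda>\<omega>. (Z \<omega> - t * indicator F \<omega>)^2)"
      by (rule Bochner_Integration.integral_nonneg) simp
    also have "\<dots> = integral\<^sup>L M (\<lambda>\<omega>. (\<Sum>x\<in>X. \<Sum>y\<in>X. indicator (E x \<inter> E y) \<omega>) - 2 * t * Z \<omega> + t^2 * indicator F \<omega>)"
      by (simp only: expand)
    also have "\<dots> = b - 2 * t * a + t^2 * c"
      using E F by (simp add: Z_def a_def b_def c_def Bochner_Integration.integral_sum)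
    finally show ?thesis .
  qed
  have "a^2 \<le> b * c"
  proof (cases "c = 0")
    case True
    then have "prob (E x) = 0" if "x \<in> X" for x
      using that E F unfolding c_def F_def
      by (metis UN_upper finite_measure_mono measure_le_0_iff)
    then show ?thesis using True by (simp add: a_def)
  next
    case False
    then have "c > 0" by (simp add: c_def zero_less_measure_iff)
    with quadratic[of "a / c"] show ?thesis by (simp add: field_simps power2_eq_square)
  qed
  then show ?thesis by (simp add: a_def b_def c_def F_def)
qed

lemma (in prob_space) indep_events_compl:
  assumes "indep_events A I"
  shows "indep_events (\<lambda>i. space M - A i) I"
proof -
  have "indep_sets (\<lambda>i. sigma_sets (space M) {A i}) I"
    using assms unfolding indep_events_def_alt by (rule indep_sets_sigma) (simp add: Int_stable_def)
  then show ?thesis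
    unfolding indep_events_def_alt
    by (rule indep_sets_mono_sets) (auto intro: sigma_sets.Compl)
qed

lemma (in prob_space) prob_INT_compl_le_exp:
  assumes "indep_events A I" "finite J" "J \<noteq> {}" "J \<subseteq> I"
  shows "prob (\<Inter>j\<in>J. space M - A j) \<le> exp (- (\<Sum>j\<in>J. prob (A j)))"
proof -
  have events: "A j \<in> events" if "j \<in> I" for j
    using assms(1) that by (auto simp: indep_events_def)
  have "prob (\<Inter>j\<in>J. space M - A j) = (\<Prod>j\<in>J. prob (space M - A j))"
    using indep_events_compl[OF assms(1)] assms(2-4) by (auto simp: indep_events_def)
  also have "\<dots> = (\<Prod>j\<in>J. 1 - prob (A j))"
    using assms(4) events by (intro prod.cong refl prob_compl) auto
  also have "\<dots> \<le> (\<Prod>j\<in>J. exp (- prob (A j)))"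
    using exp_ge_add_one_self[of "- prob (A j)" for j] by (intro prod_mono) auto
  also have "\<dots> = exp (- (\<Sum>j\<in>J. prob (A j)))"
    using exp_sum[OF assms(2), of "\<lambda>j. - prob (A j)"] by (simp add: sum_negf)
  finally show ?thesis .
qed

lemma (in prob_space) prob_INT_compl_tail_eq_0:
  fixes A :: "nat \<Rightarrow> 'a set"
  assumes indep: "indep_events A UNIV" and diverges: "\<not> summable (\<lambda>n. prob (A n))"
  shows "prob (\<Inter>n\<in>{N..}. space M - A n) = 0"
proof -
  have events: "A n \<in> events" for n
    using indep by (auto simp: indep_events_def)
  have "prob (\<Inter>n\<in>{N..}. space M - A n) \<le> exp (- y)" for y
  proof -
    have "\<not> summable (\<lambda>n. prob (A (n + N)))"
      using diverges summable_iff_shift by blast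
    then obtain K where K: "max y 0 < (\<Sum>n<K. prob (A (n + N)))"
      using summableI_nonneg_bounded[of "\<lambda>n. prob (A (n + N))"] by (meson linorder_not_less measure_nonneg)
    define J where "J = (\<lambda>n. n + N) ` {..<K}"
    have J: "finite J" "J \<noteq> {}" using K by (auto simp: J_def)
    have "prob (\<Inter>n\<in>{N..}. space M - A n) \<le> prob (\<Inter>j\<in>J. space M - A j)"
      using J events by (intro finite_measure_mono) (auto simp: J_def)
    also have "\<dots> \<le> exp (- (\<Sum>j\<in>J. prob (A j)))"
      using prob_INT_compl_le_exp[OF indep J] by simp
    also have "(\<Sum>j\<in>J. prob (A j)) = (\<Sum>n<K. prob (A (n + N)))"
      unfolding J_def by (simp add: sum.reindex)
    also have "exp (- \<dots>) \<le> exp (- y)"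
      using K by simp
    finally show ?thesis .
  qed
  then have "prob (\<Inter>n\<in>{N..}. space M - A n) \<le> 0 + e" if "e > 0" for e
    using that by (metis add_0 exp_ln minus_minus)
  then show ?thesis by (meson field_le_epsilon measure_le_0_iff)
qed

lemma (in prob_space) borel_cantelli_AE2:
  fixes A :: "nat \<Rightarrow> 'a set"
  assumes indep: "indep_events A UNIV" and diverges: "\<not> summable (\<lambda>n. prob (A n))"
  shows "AE \<omega> in M. \<exists>\<^sub>F n in sequentially. \<omega> \<in> A n"
proof -
  have "AE \<omega> in M. \<exists>n\<ge>N. \<omega> \<in> A n" for N
  proof (rule AE_I')
    show "(\<Inter>n\<in>{N..}. space M - A n) \<in> null_sets M"
      using prob_INT_compl_tail_eq_0[OF assms] indep
      by (auto simp: null_sets_def emeasure_eq_measure indep_events_def)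
  qed auto
  then show ?thesis by (simp add: frequently_sequentially AE_all_countable)
qed

locale fractal_percolation = prob_space M for M :: "'a measure" +
  fixes U :: "nat \<Rightarrow> 'n::finite dcube \<Rightarrow> 'a \<Rightarrow> real" and p :: real
  assumes U_measurable: "\<And>k Q. Q \<in> cubes_in k \<Longrightarrow> U k Q \<in> borel_measurable M"
    and U_uniform: "\<And>k Q. Q \<in> cubes_in k \<Longrightarrow> distr M lborel (U k Q) = uniform_measure lborel {0..1}"
    and U_indep: "indep_vars (\<lambda>_. borel) (\<lambda>(k, Q). U k Q) (SIGMA k:UNIV. cubes_in k)"
    and p_pos: "0 < p" and p_le_1: "p \<le> 1"
begin

definition U_events :: "nat \<times> 'n dcube \<Rightarrow> 'a set set" where
  "U_events a = {(\<lambda>(k, Q). U k Q) a -` B \<inter> space M | B. B \<in> sets borel}"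

definition retained :: "nat \<times> 'n dcube \<Rightarrow> 'a set" where
  "retained a = (\<lambda>(k, Q). U k Q) a -` {..<p} \<inter> space M"

definition ancestors :: "nat \<Rightarrow> int^'n \<Rightarrow> (nat \<times> 'n dcube) set" where
  "ancestors k x = (\<lambda>i. (k, cubeQ k i x)) ` {1..k+1}"

definition kept :: "nat \<Rightarrow> int^'n \<Rightarrow> 'a set" where
  "kept k x = (\<Inter>a\<in>ancestors k x. retained a)"

lemma mem_kept_iff: "\<omega> \<in> kept k x \<longleftrightarrow> \<omega> \<in> space M \<and> (\<forall>i\<in>{1..k+1}. U k (cubeQ k i x) \<omega> < p)"
  unfolding kept_def ancestors_def retained_def by (auto dest: bspec[of _ _ 1])

lemma int_pt_mem_PiP:
  assumes "int_pt x \<in> Sshell k" "\<omega> \<in> kept k x"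
  shows "int_pt x \<in> PiP U p \<omega>"
proof -
  have "int_pt x \<in> unit_cube x" by (simp add: unit_cube_def int_pt_def)
  then show ?thesis using assms unfolding PiP_def mem_kept_iff by blast
qed

lemma mem_PiP_imp_kept:
  assumes "y \<in> PiP U p \<omega>" "\<omega> \<in> space M"
  obtains x k where "y \<in> unit_cube x" "int_pt x \<in> Vbox k" "\<omega> \<in> kept k x"
  using assms unfolding PiP_def mem_kept_iff by (auto simp: Sshell_def split: if_splits)

lemma indep_U_events: "indep_sets U_events (SIGMA k:UNIV. cubes_in k)"
  using U_indep unfolding indep_vars_def2 U_events_def by (rule conjunct2)

lemma retained_in_U_events: "retained a \<in> U_events a"
  unfolding retained_def U_events_def by (intro CollectI exI[of _ "{..<p}"]) simp

lemma retained_in_events: "a \<in> (SIGMA k:UNIV. cubes_in k) \<Longrightarrow> retained a \<in> events"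
  unfolding retained_def using U_measurable by (auto intro: measurable_sets)

lemma prob_retained:
  assumes Q: "Q \<in> cubes_in k"
  shows "prob (retained (k, Q)) = p"
proof -
  have "prob (retained (k, Q)) = measure (distr M lborel (U k Q)) {..<p}"
    using U_measurable[OF Q] by (simp add: retained_def measure_distr)
  also have "\<dots> = measure lborel ({0..1::real} \<inter> {..<p}) / measure lborel {0..1::real}"
    by (simp add: U_uniform[OF Q])
  also have "{0..1::real} \<inter> {..<p} = {0..<p}" using p_le_1 by auto
  finally show ?thesis using p_pos by simp
qed

lemma prob_INT_retained:
  assumes "finite A" "A \<noteq> {}" "A \<subseteq> (SIGMA k:UNIV. cubes_in k)"
  shows "prob (\<Inter>a\<in>A. retained a) = p ^ card A"
proof -
  have "prob (\<Inter>a\<in>A. retained a) = (\<Prod>a\<in>A. prob (retained a))"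
    using assms retained_in_U_events by (intro indep_setsD[OF indep_U_events]) auto
  also have "\<dots> = (\<Prod>a\<in>A. p)"
    using assms(3) prob_retained by (intro prod.cong) auto
  finally show ?thesis by simp
qed

lemma card_ancestors: "card (ancestors k x) = k + 1"
proof -
  have "inj_on (\<lambda>i. (k, cubeQ k i x)) {1..k+1}"
    by (rule inj_onI) (auto simp: cubeQ_def)
  then show ?thesis by (simp add: ancestors_def card_image)
qed

lemma ancestors_subset:
  "int_pt x \<in> Vbox k \<Longrightarrow> ancestors k x \<subseteq> (SIGMA k:UNIV. cubes_in k)"
  unfolding ancestors_def using cubeQ_mem_cubes_in by blast

lemma finite_ancestors: "finite (ancestors k x)"
  by (simp add: ancestors_def)

lemma ancestors_nonempty: "ancestors k x \<noteq> {}"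
  by (simp add: ancestors_def)

lemma kept_in_events:
  assumes "int_pt x \<in> Vbox k"
  shows "kept k x \<in> events"
proof -
  have "retained a \<in> events" if "a \<in> ancestors k x" for a
    using that ancestors_subset[OF assms] retained_in_events by blast
  then show ?thesis
    unfolding kept_def by (intro sets.finite_INT finite_ancestors ancestors_nonempty) auto
qed

lemma prob_kept: "int_pt x \<in> Vbox k \<Longrightarrow> prob (kept k x) = p ^ (k + 1)"
  unfolding kept_def
  by (simp add: prob_INT_retained finite_ancestors ancestors_nonempty ancestors_subset card_ancestors)

text \<open>The kept events of two points are dependent only through their common ancestors, i.e.\ the
  levels at which both points lie in the same cube.\<close>

lemma prob_kept_Int:
  assumes "int_pt x \<in> Vbox k" "int_pt y \<in> Vbox k"
  shows "prob (kept k x \<inter> kept k y) * p ^ card {i\<in>{1..k+1}. cubeQ k i y = cubeQ k i x} = p ^ (2 * (k + 1))"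
proof -
  have "ancestors k x \<inter> ancestors k y = (\<lambda>i. (k, cubeQ k i x)) ` {i\<in>{1..k+1}. cubeQ k i y = cubeQ k i x}"
    by (auto simp: ancestors_def cubeQ_def)
  moreover have "inj_on (\<lambda>i. (k, cubeQ k i x)) {i\<in>{1..k+1}. cubeQ k i y = cubeQ k i x}"
    by (rule inj_onI) (auto simp: cubeQ_def)
  ultimately have shared: "card (ancestors k x \<inter> ancestors k y) = card {i\<in>{1..k+1}. cubeQ k i y = cubeQ k i x}"
    by (simp add: card_image)
  have "prob (kept k x \<inter> kept k y) = p ^ card (ancestors k x \<union> ancestors k y)"
    unfolding kept_def INT_Un[symmetric] using ancestors_subset assms
    by (intro prob_INT_retained) (auto simp: finite_ancestors ancestors_nonempty)
  moreover have "card (ancestors k x \<union> ancestors k y) + card (ancestors k x \<inter> ancestors k y) = 2 * (k + 1)"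
    using card_Un_Int[OF finite_ancestors finite_ancestors, of k x k y] by (simp add: card_ancestors)
  ultimately show ?thesis by (simp add: shared power_add[symmetric])
qed

lemma prob_kept_Int_le:
  assumes "1 \<le> p * 2 ^ CARD('n)" "int_pt x \<in> Vbox k" "int_pt y \<in> Vbox k"
  shows "prob (kept k x \<inter> kept k y)
    \<le> p ^ (2 * (k + 1)) * (1 + (\<Sum>j\<in>{1..k+1}. if cubeQ k j y = cubeQ k j x then (2 ^ CARD('n)) ^ j else 0))"
proof -
  define m :: real where "m = 2 ^ CARD('n)"
  define S where "S = {i\<in>{1..k+1}. cubeQ k i y = cubeQ k i x}"
  have "1 \<le> (p * m) ^ card S" using assms(1) by (simp add: m_def)
  then have "prob (kept k x \<inter> kept k y) \<le> prob (kept k x \<inter> kept k y) * (p * m) ^ card S"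
    by (metis mult_left_mono mult.right_neutral measure_nonneg)
  also have "\<dots> = p ^ (2 * (k + 1)) * m ^ card S"
    using prob_kept_Int[OF assms(2,3)] by (simp add: S_def power_mult_distrib)
  also have "\<dots> \<le> p ^ (2 * (k + 1)) * (1 + (\<Sum>j\<in>S. m ^ j))"
    using p_pos by (intro mult_left_mono power_card_le_sum_power[of m S "k+1"]) (auto simp: m_def S_def)
  also have "(\<Sum>j\<in>S. m ^ j) = (\<Sum>j\<in>{1..k+1}. if cubeQ k j y = cubeQ k j x then m ^ j else 0)"
    unfolding S_def by (rule sum.inter_filter) simp
  finally show ?thesis unfolding m_def .
qed

lemma sum_prob_kept_Int_le:
  assumes pm: "1 \<le> p * 2 ^ CARD('n)" and X: "finite X" "\<And>y. y \<in> X \<Longrightarrow> int_pt y \<in> Vbox k"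
    and x: "int_pt x \<in> Vbox k"
  shows "(\<Sum>y\<in>X. prob (kept k x \<inter> kept k y))
    \<le> p ^ (2 * (k + 1)) * (card X + real (k + 1) * (2 ^ CARD('n)) ^ (k + 1))"
proof -
  define m :: real where "m = 2 ^ CARD('n)"
  define same where "same j y \<longleftrightarrow> cubeQ k j y = cubeQ k j x" for j y
  have level: "m ^ j * card {y\<in>X. same j y} \<le> m ^ (k + 1)" if "j \<in> {1..k+1}" for j
  proof -
    have "finite {y. cubeQ k j y = cubeQ k j x}"
      unfolding cubeQ_fibre_eq_lattice_box by (rule finite_lattice_box)
    then have "card {y\<in>X. same j y} \<le> card {y. cubeQ k j y = cubeQ k j x}"
      by (rule card_mono) (auto simp: same_def)
    then have "real (card {y\<in>X. same j y}) \<le> m ^ (k + 1 - j)"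
      unfolding cubeQ_fibre_eq_lattice_box card_lattice_box m_def
      by (simp add: power_mult[symmetric] mult.commute)
    then have "m ^ j * card {y\<in>X. same j y} \<le> m ^ j * m ^ (k + 1 - j)"
      by (simp add: m_def)
    also have "\<dots> = m ^ (k + 1)" using that by (simp flip: power_add)
    finally show ?thesis .
  qed
  have "(\<Sum>j\<in>{1..k+1}. m ^ j * card {y\<in>X. same j y}) \<le> (\<Sum>j\<in>{1..k+1}. m ^ (k + 1))"
    using level by (rule sum_mono)
  then have count: "(\<Sum>j\<in>{1..k+1}. m ^ j * card {y\<in>X. same j y}) \<le> (k + 1) * m ^ (k + 1)"
    by simp
  have swap: "(\<Sum>y\<in>X. \<Sum>j\<in>{1..k+1}. if same j y then m ^ j else 0)
      = (\<Sum>j\<in>{1..k+1}. m ^ j * card {y\<in>X. same j y})"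
    using X(1) by (subst sum.swap) (simp add: sum.If_cases Int_def conj_commute mult.commute)
  have "(\<Sum>y\<in>X. prob (kept k x \<inter> kept k y))
      \<le> (\<Sum>y\<in>X. p ^ (2 * (k + 1)) * (1 + (\<Sum>j\<in>{1..k+1}. if same j y then m ^ j else 0)))"
    unfolding same_def m_def using prob_kept_Int_le[OF pm x X(2)] by (intro sum_mono)
  also have "\<dots> = p ^ (2 * (k + 1)) * (card X + (\<Sum>j\<in>{1..k+1}. m ^ j * card {y\<in>X. same j y}))"
    by (simp only: sum_distrib_left[symmetric] sum.distrib swap real_of_card)
  also have "\<dots> \<le> p ^ (2 * (k + 1)) * (card X + (k + 1) * m ^ (k + 1))"
    using count p_pos by (intro mult_left_mono) auto
  finally show ?thesis unfolding m_def .
qed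

definition corner_event :: "nat \<Rightarrow> 'a set" where
  "corner_event k = (\<Union>x\<in>corner k. kept (Suc k) x)"

lemma prob_corner_event_ge:
  assumes pm: "1 \<le> p * 2 ^ CARD('n)"
  shows "1 / ((2 ^ CARD('n))^2 * real (k + 3)) \<le> prob (corner_event k)"
proof -
  define m :: real where "m = 2 ^ CARD('n)"
  define X :: "(int^'n) set" where "X = corner k"
  define c where "c = real (card X)"
  define P where "P = prob (corner_event k)"
  have V: "\<And>x. x \<in> X \<Longrightarrow> int_pt x \<in> Vbox (Suc k)"
    unfolding X_def using corner_in_Vbox .
  have X: "finite X" by (simp add: X_def finite_corner)
  have m1: "1 \<le> m" by (simp add: m_def)
  have c: "c = m ^ k"
    by (simp add: c_def X_def corner_def card_lattice_box m_def power_mult[symmetric] mult.commute)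
  then have c0: "0 < c" using m1 by simp
  have "(c * p ^ (k + 2))^2 = (\<Sum>x\<in>X. prob (kept (Suc k) x))^2"
    using prob_kept[OF V] by (simp add: c_def)
  also have "\<dots> \<le> (\<Sum>x\<in>X. \<Sum>y\<in>X. prob (kept (Suc k) x \<inter> kept (Suc k) y)) * P"
    unfolding P_def corner_event_def X_def[symmetric] using X V kept_in_events
    by (intro chung_erdos_inequality) auto
  also have "\<dots> \<le> (\<Sum>x\<in>X. p ^ (2 * (k + 2)) * (c + real (k + 2) * m ^ (k + 2))) * P"
    using sum_prob_kept_Int_le[OF pm X V V] unfolding P_def
    by (intro mult_right_mono sum_mono) (simp_all add: c_def m_def)
  also have "\<dots> = (c * p ^ (2 * (k + 2))) * ((c + real (k + 2) * m ^ (k + 2)) * P)"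
    by (simp add: c_def)
  finally have "(c * p ^ (2 * (k + 2))) * c \<le> (c * p ^ (2 * (k + 2))) * ((c + real (k + 2) * m ^ (k + 2)) * P)"
    by (simp add: power2_eq_square power_mult algebra_simps)
  then have "c \<le> (c + real (k + 2) * m ^ (k + 2)) * P"
    using c0 p_pos by (simp add: mult_le_cancel_left_pos)
  also have "c + real (k + 2) * m ^ (k + 2) = c * (1 + real (k + 2) * m^2)"
    unfolding c by (simp add: algebra_simps power_add power2_eq_square)
  finally have "1 \<le> (1 + real (k + 2) * m^2) * P"
    using c0 by (simp add: mult.assoc mult_le_cancel_left1)
  also have "\<dots> \<le> m^2 * real (k + 3) * P"
    using m1 by (intro mult_right_mono) (auto simp: P_def algebra_simps)
  finally show ?thesis
    using m1 by (simp add: P_def m_def divide_le_eq mult.commute)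
qed

lemma Int_stable_U_events: "Int_stable (U_events a)"
  unfolding Int_stable_def U_events_def
proof safe
  fix A B :: "real set" assume "A \<in> sets borel" "B \<in> sets borel"
  then show "\<exists>C. ((\<lambda>(k, Q). U k Q) a -` A \<inter> space M) \<inter> ((\<lambda>(k, Q). U k Q) a -` B \<inter> space M)
      = (\<lambda>(k, Q). U k Q) a -` C \<inter> space M \<and> C \<in> sets borel"
    by (intro exI[of _ "A \<inter> B"]) auto
qed

text \<open>Corner event \<open>k\<close> depends only on the uniform variables of stage \<open>k + 1\<close>.\<close>

lemma indep_corner_events: "indep_events corner_event UNIV"
proof -
  define I :: "nat \<Rightarrow> (nat \<times> 'n dcube) set" where "I n = {Suc n} \<times> cubes_in (Suc n)" for n
  define \<F> where "\<F> n = sigma_sets (space M) (\<Union>a\<in>I n. U_events a)" for n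
  have indep: "indep_sets \<F> UNIV"
    unfolding \<F>_def
  proof (rule indep_sets_collect_sigma)
    show "indep_sets U_events (\<Union>n\<in>UNIV. I n)"
      by (rule indep_sets_mono_index[OF _ indep_U_events]) (auto simp: I_def)
  qed (auto simp: Int_stable_U_events disjoint_family_on_def I_def)
  have "corner_event n \<in> \<F> n" for n
  proof -
    have "(\<Union>a\<in>I n. U_events a) \<subseteq> Pow (space M)" by (auto simp: U_events_def)
    then interpret \<F>: sigma_algebra "space M" "\<F> n"
      unfolding \<F>_def by (rule sigma_algebra_sigma_sets)
    have retained: "retained a \<in> \<F> n" if "x \<in> corner n" "a \<in> ancestors (Suc n) x" for a x
    proof -
      have "a \<in> I n"
        using ancestors_subset[OF corner_in_Vbox] that by (auto simp: I_def ancestors_def)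
      then show ?thesis
        unfolding \<F>_def using retained_in_U_events by (intro sigma_sets.Basic) blast
    qed
    show ?thesis
      unfolding corner_event_def kept_def
      using retained ancestors_nonempty
      by (intro \<F>.finite_UN \<F>.finite_INT finite_corner finite_ancestors) auto
  qed
  then show ?thesis
    unfolding indep_events_def_alt by (intro indep_sets_mono_sets[OF indep]) auto
qed

lemma AE_unbounded:
  assumes pm: "1 \<le> p * 2 ^ CARD('n)"
  shows "AE \<omega> in M. \<not> bounded (PiP U p \<omega>)"
proof -
  define m :: real where "m = 2 ^ CARD('n)"
  have "\<not> summable (\<lambda>k. prob (corner_event k))"
  proof
    assume "summable (\<lambda>k. prob (corner_event k))"
    then have "summable (\<lambda>k. inverse (m^2) * inverse (real (k + 3)))"
    proof (rule summable_comparison_test')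
      show "norm (inverse (m^2) * inverse (real (k + 3))) \<le> prob (corner_event k)" for k
        using prob_corner_event_ge[OF pm, of k] by (simp add: m_def inverse_eq_divide)
    qed
    moreover have "inverse (m^2) \<noteq> 0" by (simp add: m_def)
    ultimately have "summable (\<lambda>k. inverse (real (k + 3)))"
      using summable_cmult_iff by blast
    then have "summable (\<lambda>k. inverse (real k))"
      using summable_iff_shift[of "\<lambda>k. inverse (real k)" 3] by simp
    then show False using not_summable_harmonic by blast
  qed
  then have "AE \<omega> in M. \<exists>\<^sub>F k in sequentially. \<omega> \<in> corner_event k"
    by (rule borel_cantelli_AE2[OF indep_corner_events])
  then show ?thesis
  proof eventually_elim
    case (elim \<omega>)
    show "\<not> bounded (PiP U p \<omega>)"
    proof
      assume "bounded (PiP U p \<omega>)"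
      then obtain K where K: "PiP U p \<omega> \<subseteq> Vbox K" by (auto simp: bounded_iff_subset_Vbox)
      obtain k where k: "K \<le> k" "\<omega> \<in> corner_event k"
        using elim by (auto simp: frequently_sequentially)
      then obtain x where x: "x \<in> corner k" "\<omega> \<in> kept (Suc k) x"
        unfolding corner_event_def by blast
      have "int_pt x \<in> Sshell (Suc k)" using corner_in_Sshell[OF x(1)] .
      moreover have "int_pt x \<in> Vbox k"
        using int_pt_mem_PiP[OF \<open>int_pt x \<in> Sshell (Suc k)\<close> x(2)] K Vbox_mono[OF k(1)] by blast
      ultimately show False by (simp add: Sshell_def)
    qed
  qed
qed

definition survivor_event :: "nat \<Rightarrow> 'a set" where
  "survivor_event k = (\<Union>x\<in>lattice_box (vec (- (2^k))) (2^(k+1)). kept k x)"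

lemma survivor_event_in_events: "survivor_event k \<in> events"
  unfolding survivor_event_def
  by (intro sets.finite_UN kept_in_events finite_lattice_box) (simp add: int_pt_in_Vbox_iff)

lemma prob_survivor_event_le: "prob (survivor_event k) \<le> (p * 2 ^ CARD('n)) ^ (k + 1)"
proof -
  have "prob (survivor_event k) \<le> (\<Sum>x\<in>lattice_box (vec (- (2^k))) (2^(k+1)). prob (kept k x))"
    unfolding survivor_event_def
    by (intro finite_measure_subadditive_finite finite_lattice_box) (auto intro: kept_in_events simp: int_pt_in_Vbox_iff)
  also have "\<dots> = real ((2^(k+1)) ^ CARD('n)) * p ^ (k + 1)"
    by (simp add: prob_kept int_pt_in_Vbox_iff card_lattice_box)
  also have "\<dots> = (p * 2 ^ CARD('n)) ^ (k + 1)"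
    by (simp add: power_mult_distrib power_mult[symmetric] mult.commute)
  finally show ?thesis .
qed

lemma AE_bounded:
  assumes pm: "p * 2 ^ CARD('n) < 1"
  shows "AE \<omega> in M. bounded (PiP U p \<omega>)"
proof -
  have "summable (\<lambda>k. (p * 2 ^ CARD('n)) ^ (k + 1))"
    using pm p_pos by (simp add: summable_geometric)
  then have "summable (\<lambda>k. prob (survivor_event k))"
  proof (rule summable_comparison_test')
    show "norm (prob (survivor_event k)) \<le> (p * 2 ^ CARD('n)) ^ (k + 1)" for k
      using prob_survivor_event_le by simp
  qed
  then have "AE \<omega> in M. eventually (\<lambda>k. \<omega> \<in> space M - survivor_event k) sequentially"
    by (intro borel_cantelli_AE1 survivor_event_in_events) (simp_all add: emeasure_eq_measure)
  then show ?thesis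
  proof eventually_elim
    case (elim \<omega>)
    then obtain K where K: "\<And>k. K \<le> k \<Longrightarrow> \<omega> \<in> space M - survivor_event k"
      by (auto simp: eventually_sequentially)
    have "y \<in> Vbox K" if y: "y \<in> PiP U p \<omega>" for y
    proof -
      have "\<omega> \<in> space M" using K by blast
      with y obtain x k where x: "y \<in> unit_cube x" "int_pt x \<in> Vbox k" "\<omega> \<in> kept k x"
        by (rule mem_PiP_imp_kept)
      then have "\<omega> \<in> survivor_event k"
        unfolding survivor_event_def int_pt_in_Vbox_iff by blast
      then have "k \<le> K" using K[of k] by (cases "K \<le> k") auto
      then show ?thesis
        using x unit_cube_subset_Vbox Vbox_mono by blast
    qed
    then show ?case by (auto simp: bounded_iff_subset_Vbox)
  qed
qed

end

theorem lemma3p3: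
  fixes M :: "'a measure"
    and U :: "nat \<Rightarrow> 'n::finite dcube \<Rightarrow> 'a \<Rightarrow> real"
    and p :: real
  assumes "prob_space M"
    and "\<And>k Q. Q \<in> cubes_in k \<Longrightarrow> U k Q \<in> borel_measurable M"
    and "\<And>k Q. Q \<in> cubes_in k \<Longrightarrow> distr M lborel (U k Q) = uniform_measure lborel {0..1}"
    and "prob_space.indep_vars M (\<lambda>_. borel) (\<lambda>(k, Q). U k Q) (SIGMA k:UNIV. cubes_in k)"
    and "0 < p" and "p \<le> 1"
  shows "(p \<ge> (1/2) ^ CARD('n) \<longrightarrow> (AE \<omega> in M. \<not> bounded (PiP U p \<omega>)))
       \<and> (p < (1/2) ^ CARD('n) \<longrightarrow> (AE \<omega> in M. bounded (PiP U p \<omega>)))"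
proof -
  interpret fractal_percolation M U p
    using assms by (intro fractal_percolation.intro fractal_percolation_axioms.intro) auto
  have threshold: "(1/2) ^ CARD('n) \<le> p \<longleftrightarrow> 1 \<le> p * 2 ^ CARD('n)"
    by (simp add: power_one_over divide_le_eq)
  show ?thesis
    using AE_unbounded AE_bounded by (simp add: threshold not_le[symmetric])
qed

end
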